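(* Let $X$ and $Y$ be shift spaces with $Y$ irreducible. If $\phi : X \to Y$ is an open code, then $\phi$ is onto.
   Context: Shift spaces are closed shift-invariant subsets of $\mathcal{A}^{\mathbb{Z}}$ ($\mathcal{A}$ finite, with the shift $\sigma(x)_i=x_{i+1}$); a code is a continuous shift-commuting map. $Y$ is irreducible if for all words $u,v$ occurring in $Y$ there is $w$ with $uwv$ occurring in $Y$. Open: images of open sets are open. *)

theory Defs
  imports "HOL-Analysis.Analysis"
begin

definition full_shift_top :: "(int \<Rightarrow> 'a::finite) topology" where
  "full_shift_top = product_topology (\<lambda>_. discrete_topology UNIV) UNIV"

definition shift :: "(int \<Rightarrow> 'a) \<Rightarrow> (int \<Rightarrow> 'a)" where
  "shift x = (\<lambda>i. x (i + 1))"

definition shift_space :: "(int \<Rightarrow> 'a::finite) set \<Rightarrow> bool" where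
  "shift_space X \<longleftrightarrow> closedin full_shift_top X \<and> shift ` X = X"

definition code :: "(int \<Rightarrow> 'a::finite) set \<Rightarrow> (int \<Rightarrow> 'b::finite) set
                     \<Rightarrow> ((int \<Rightarrow> 'a) \<Rightarrow> (int \<Rightarrow> 'b)) \<Rightarrow> bool" where
  "code X Y \<phi> \<longleftrightarrow> \<phi> ` X \<subseteq> Y
     \<and> continuous_map (subtopology full_shift_top X) (subtopology full_shift_top Y) \<phi>
     \<and> (\<forall>x\<in>X. \<phi> (shift x) = shift (\<phi> x))"

definition occurs_in :: "'a list \<Rightarrow> (int \<Rightarrow> 'a) set \<Rightarrow> bool" where
  "occurs_in u Y \<longleftrightarrow> (\<exists>y\<in>Y. \<exists>i::int. \<forall>k<length u. y (i + int k) = u ! k)"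

definition irreducible_shift :: "(int \<Rightarrow> 'a::finite) set \<Rightarrow> bool" where
  "irreducible_shift Y \<longleftrightarrow>
     (\<forall>u v. occurs_in u Y \<and> occurs_in v Y \<longrightarrow> (\<exists>w. occurs_in (u @ w @ v) Y))"

end

theory Submission
  imports Defs
begin

text \<open>The image \<open>P = \<phi> ` X\<close> is compact, hence closed; it is open in \<open>Y\<close> because \<open>\<phi>\<close> is
  open; and it is shift-invariant because \<open>\<phi>\<close> commutes with the shift. Irreducibility makes
  every nonempty shift-invariant open subset of \<open>Y\<close> dense: given a cylinder around a point
  of \<open>P\<close> and a central block of an arbitrary \<open>y \<in> Y\<close>, a point of \<open>Y\<close> in which the block of
  \<open>y\<close> is followed by the cylinder's block lies, after a shift, in \<open>P\<close>, so by invariance \<open>P\<close>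
  also contains a point that agrees with \<open>y\<close> on the block. Being dense and closed, \<open>P = Y\<close>.\<close>

lemma topspace_full_shift_top [simp]: "topspace full_shift_top = UNIV"
  by (simp add: full_shift_top_def)

lemma compact_space_full_shift_top: "compact_space full_shift_top"
  unfolding full_shift_top_def compact_space_product_topology compact_space_discrete_topology
  by simp

lemma Hausdorff_space_full_shift_top: "Hausdorff_space full_shift_top"
  unfolding full_shift_top_def by (simp add: Hausdorff_space_product_topology)

lemma openin_full_shift_top_central_cylinder:
  fixes U :: "(int \<Rightarrow> 'a::finite) set"
  assumes "openin full_shift_top U" "z \<in> U"
  obtains n :: nat where "\<And>w. (\<forall>j. \<bar>j\<bar> \<le> int n \<longrightarrow> w j = z j) \<Longrightarrow> w \<in> U"
proof -
  obtain V where fin: "finite {i. V i \<noteq> UNIV}" and zV: "z \<in> Pi\<^sub>E UNIV V"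
    and sub: "Pi\<^sub>E UNIV V \<subseteq> U"
    using assms unfolding full_shift_top_def openin_product_topology_alt by force
  define n where "n = (\<Sum>i | V i \<noteq> UNIV. nat \<bar>i\<bar>)"
  have bound: "\<bar>i\<bar> \<le> int n" if "V i \<noteq> UNIV" for i
  proof -
    have "nat \<bar>i\<bar> \<le> n"
      unfolding n_def using fin that by (intro member_le_sum) auto
    then show ?thesis by linarith
  qed
  have "w \<in> U" if agree: "\<forall>j. \<bar>j\<bar> \<le> int n \<longrightarrow> w j = z j" for w
  proof -
    have "w i \<in> V i" for i
      using zV agree bound[of i] by (cases "V i = UNIV") auto
    then show ?thesis using sub by auto
  qed
  then show ?thesis using that by blast
qed

definition shift_by :: "int \<Rightarrow> (int \<Rightarrow> 'a) \<Rightarrow> (int \<Rightarrow> 'a)" where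
  "shift_by j x = (\<lambda>i. x (i + j))"

lemma shift_by_shift_by [simp]: "shift_by a (shift_by b x) = shift_by (a + b) x"
  by (simp add: shift_by_def add.assoc)

lemma shift_by_0 [simp]: "shift_by 0 x = x"
  by (simp add: shift_by_def)

lemma shift_by_mem:
  assumes S: "shift ` S = S" and "x \<in> S"
  shows "shift_by j x \<in> S"
proof (induction j rule: int_induct[where k = 0])
  case base
  then show ?case using \<open>x \<in> S\<close> by simp
next
  case (step1 i)
  have "shift_by (i + 1) x = shift (shift_by i x)"
    by (simp add: shift_def shift_by_def add_ac)
  then show ?case using step1 S by blast
next
  case (step2 i)
  then obtain x' where "x' \<in> S" "shift_by i x = shift x'"
    using S by blast
  moreover have "shift_by (i - 1) x = shift_by (-1) (shift_by i x)"
    by simp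
  ultimately show ?case
    by (simp add: shift_def shift_by_def)
qed

lemma shift_image_of_code:
  assumes "code X Y \<phi>" "shift ` X = X"
  shows "shift ` (\<phi> ` X) = \<phi> ` X"
proof -
  have "shift ` (\<phi> ` X) = (\<lambda>x. \<phi> (shift x)) ` X"
    using assms(1) unfolding code_def image_image by (auto intro!: image_cong)
  also have "\<dots> = \<phi> ` (shift ` X)"
    by (simp add: image_image)
  also have "\<dots> = \<phi> ` X"
    using assms(2) by simp
  finally show ?thesis .
qed

definition occurs_at :: "(int \<Rightarrow> 'a) \<Rightarrow> int \<Rightarrow> 'a list \<Rightarrow> bool" where
  "occurs_at y i u \<longleftrightarrow> (\<forall>k<length u. y (i + int k) = u ! k)"

definition central_block :: "(int \<Rightarrow> 'a) \<Rightarrow> nat \<Rightarrow> 'a list" where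
  "central_block z n = map (\<lambda>k. z (int k - int n)) [0..<2 * n + 1]"

lemma occurs_in_iff_occurs_at: "occurs_in u Y \<longleftrightarrow> (\<exists>y\<in>Y. \<exists>i. occurs_at y i u)"
  by (simp add: occurs_in_def occurs_at_def)

lemma occurs_at_append:
  "occurs_at y i (u @ v) \<longleftrightarrow> occurs_at y i u \<and> occurs_at y (i + int (length u)) v"
proof -
  have "(\<forall>k<length u + length v. P k) \<longleftrightarrow> (\<forall>k<length u. P k) \<and> (\<forall>k<length v. P (length u + k))"
    for P :: "nat \<Rightarrow> bool"
  proof (intro iffI conjI allI impI)
    fix k
    assume "(\<forall>k<length u. P k) \<and> (\<forall>k<length v. P (length u + k))" "k < length u + length v"
    then show "P k"
      by (cases "k < length u") (auto dest: spec[of _ "k - length u"])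
  qed auto
  then show ?thesis
    by (simp add: occurs_at_def nth_append add.assoc)
qed

lemma occurs_at_central_block_iff:
  "occurs_at y i (central_block z n) \<longleftrightarrow>
     (\<forall>j. \<bar>j\<bar> \<le> int n \<longrightarrow> shift_by (i + int n) y j = z j)"
proof -
  have "(\<forall>k<2 * n + 1. P (int k - int n)) \<longleftrightarrow> (\<forall>j. \<bar>j\<bar> \<le> int n \<longrightarrow> P j)"
    for P :: "int \<Rightarrow> bool"
  proof (intro iffI allI impI)
    fix j :: int
    assume P: "\<forall>k<2 * n + 1. P (int k - int n)" and "\<bar>j\<bar> \<le> int n"
    then have "nat (j + int n) < 2 * n + 1" "int (nat (j + int n)) - int n = j"
      by auto
    then show "P j"
      using P by (metis (no_types))
  qed auto
  from this[of "\<lambda>j. y (i + int n + j) = z j"] show ?thesis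
    by (simp add: occurs_at_def central_block_def shift_by_def algebra_simps del: upt_Suc)
qed

lemma occurs_in_central_block: "y \<in> Y \<Longrightarrow> occurs_in (central_block y n) Y"
  unfolding occurs_in_iff_occurs_at
  by (intro bexI[of _ y] exI[of _ "- int n"]) (simp_all add: occurs_at_central_block_iff)

lemma irreducible_shift_invariant_openin_dense:
  fixes Y :: "(int \<Rightarrow> 'a::finite) set"
  assumes SY: "shift ` Y = Y" and irr: "irreducible_shift Y"
    and SP: "shift ` P = P" and "P \<noteq> {}"
    and openP: "openin (subtopology full_shift_top Y) P" and "y \<in> Y"
  obtains p where "p \<in> P" "\<forall>j. \<bar>j\<bar> \<le> int m \<longrightarrow> p j = y j"
proof -
  obtain T where oT: "openin full_shift_top T" and PT: "P = T \<inter> Y"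
    using openP by (auto simp: openin_subtopology)
  obtain z where "z \<in> T" "z \<in> Y"
    using \<open>P \<noteq> {}\<close> PT by blast
  obtain n where cyl: "\<And>w. (\<forall>j. \<bar>j\<bar> \<le> int n \<longrightarrow> w j = z j) \<Longrightarrow> w \<in> T"
    using openin_full_shift_top_central_cylinder[OF oT \<open>z \<in> T\<close>] by blast
  obtain w where "occurs_in (central_block y m @ w @ central_block z n) Y"
    using irr occurs_in_central_block[OF \<open>y \<in> Y\<close>] occurs_in_central_block[OF \<open>z \<in> Y\<close>]
    unfolding irreducible_shift_def by blast
  then obtain y' i where "y' \<in> Y"
    and occ: "occurs_at y' i (central_block y m @ w @ central_block z n)"
    unfolding occurs_in_iff_occurs_at by blast
  define a where "a = i + int (length (central_block y m)) + int (length w)"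
  from occ have occ_y: "occurs_at y' i (central_block y m)"
    and occ_z: "occurs_at y' a (central_block z n)"
    by (simp_all add: occurs_at_append a_def add.assoc)
  have "shift_by (a + int n) y' \<in> P"
    using cyl occ_z shift_by_mem[OF SY \<open>y' \<in> Y\<close>] PT
    by (auto simp: occurs_at_central_block_iff)
  from shift_by_mem[OF SP this, of "- (a + int n)"] have "y' \<in> P"
    by simp
  then have "shift_by (i + int m) y' \<in> P"
    by (rule shift_by_mem[OF SP])
  with occ_y show ?thesis
    using that by (auto simp: occurs_at_central_block_iff)
qed

lemma irreducible_shift_invariant_clopen_eq:
  fixes Y :: "(int \<Rightarrow> 'a::finite) set"
  assumes "shift ` Y = Y" "irreducible_shift Y" "shift ` P = P" "P \<noteq> {}"
    and openP: "openin (subtopology full_shift_top Y) P" and closedP: "closedin full_shift_top P"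
  shows "P = Y"
proof
  show "P \<subseteq> Y"
    using openin_imp_subset[OF openP] by simp
  show "Y \<subseteq> P"
  proof
    fix y
    assume "y \<in> Y"
    show "y \<in> P"
    proof (rule ccontr)
      assume "y \<notin> P"
      have "openin full_shift_top (- P)"
        using closedP by (simp add: closedin_def Compl_eq_Diff_UNIV)
      then obtain m where "\<And>w. (\<forall>j. \<bar>j\<bar> \<le> int m \<longrightarrow> w j = y j) \<Longrightarrow> w \<in> - P"
        using openin_full_shift_top_central_cylinder \<open>y \<notin> P\<close> by blast
      moreover obtain p where "p \<in> P" "\<forall>j. \<bar>j\<bar> \<le> int m \<longrightarrow> p j = y j"
        using irreducible_shift_invariant_openin_dense[OF assms(1-4) openP \<open>y \<in> Y\<close>] by blast
      ultimately show False by blast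
    qed
  qed
qed

lemma closedin_image_of_code:
  assumes "shift_space X" "code X Y \<phi>"
  shows "closedin full_shift_top (\<phi> ` X)"
proof -
  have "compactin full_shift_top X"
    using assms(1) closedin_compact_space[OF compact_space_full_shift_top]
    by (auto simp: shift_space_def)
  then have "compactin (subtopology full_shift_top X) X"
    by (simp add: compactin_subtopology)
  then have "compactin (subtopology full_shift_top Y) (\<phi> ` X)"
    using assms(2) image_compactin unfolding code_def by blast
  then show ?thesis
    using compactin_imp_closedin[OF Hausdorff_space_full_shift_top]
    by (auto simp: compactin_subtopology)
qed

theorem lemma2p1:
  fixes X :: "(int \<Rightarrow> 'a::finite) set" and Y :: "(int \<Rightarrow> 'b::finite) set"
    and \<phi> :: "(int \<Rightarrow> 'a) \<Rightarrow> (int \<Rightarrow> 'b)"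
  assumes "shift_space X" and "X \<noteq> {}"
    and "shift_space Y" and "irreducible_shift Y"
    and "code X Y \<phi>"
    and "open_map (subtopology full_shift_top X) (subtopology full_shift_top Y) \<phi>"
  shows "\<phi> ` X = Y"
proof (rule irreducible_shift_invariant_clopen_eq)
  show "shift ` Y = Y"
    using assms(3) by (simp add: shift_space_def)
  show "shift ` (\<phi> ` X) = \<phi> ` X"
    using assms(1) shift_image_of_code[OF assms(5)] by (simp add: shift_space_def)
  show "openin (subtopology full_shift_top Y) (\<phi> ` X)"
    using assms(6) openin_topspace[of "subtopology full_shift_top X"] unfolding open_map_def by simp
  show "closedin full_shift_top (\<phi> ` X)"
    using assms(1,5) by (rule closedin_image_of_code)
qed (use assms(2,4) in auto)

end
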